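(* Let $T,S\in\mathcal M_n(\mathbb C)$ and let $e,f,g,h$ be non-negative continuous functions on $[0,\infty)$ such that $f(t)g(t)=t$ and $e(t)h(t)=t$ for all $t\ge0$. Then $$s_j(T+S)\le\big\|g^2(|T^*|)+h^2(|S^*|)\big\|^{1/2}\,s_j^{1/2}\big(f^2(|T|)+e^2(|S|)\big)\quad\text{for every }j=1,\dots,n.$$ Furthermore, for every $p>0$, $$\|T+S\|_p\le\big\|g^2(|T^*|)+h^2(|S^*|)\big\|^{1/2}\,\big\|f^2(|T|)+e^2(|S|)\big\|_{p/2}^{1/2}.$$
   Context: $\mathcal M_n(\mathbb C)$ is the set of $n\times n$ complex matrices; $|T|=(T^*T)^{1/2}$; functions of positive matrices are defined by functional calculus. $s_1(T)\ge\dots\ge s_n(T)$ are the singular values of $T$ (eigenvalues of $|T|$). $\|T\|=s_1(T)$ is the operator norm, and for $p>0$, $\|T\|_p=\big(\sum_{j=1}^n s_j^p(T)\big)^{1/p}$ is the Schatten $p$-norm (a quasi-norm for $p<1$). *)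

theory Defs
  imports "Jordan_Normal_Form.Schur_Decomposition"
begin

text \<open>Matrices in M_n(C) are represented as Jordan_Normal_Form matrices of type
  complex mat with carrier carrier_mat n n.  T* is mat_adjoint T.\<close>

definition unitary_mat :: "nat \<Rightarrow> complex mat \<Rightarrow> bool" where
  "unitary_mat n U \<longleftrightarrow> U \<in> carrier_mat n n \<and> U * mat_adjoint U = 1\<^sub>m n \<and> mat_adjoint U * U = 1\<^sub>m n"

definition diag_of_list :: "complex list \<Rightarrow> complex mat" where
  "diag_of_list d = mat (length d) (length d) (\<lambda>(i,j). if i = j then d ! i else 0)"

text \<open>Functional calculus for a Hermitian matrix A = U diag(d) U*, with d real:
  f(A) = U diag(f(d)) U*.  (This is independent of the chosen unitary diagonalisation.)\<close>
definition mat_fun :: "(real \<Rightarrow> real) \<Rightarrow> complex mat \<Rightarrow> complex mat" where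
  "mat_fun f A = (SOME B. \<exists>U d. unitary_mat (dim_row A) U \<and> length d = dim_row A \<and>
      A = U * diag_of_list (map complex_of_real d) * mat_adjoint U \<and>
      B = U * diag_of_list (map (\<lambda>x. complex_of_real (f x)) d) * mat_adjoint U)"

definition mat_abs :: "complex mat \<Rightarrow> complex mat" where
  "mat_abs T = mat_fun sqrt (mat_adjoint T * T)"

definition eigenvalue_list :: "complex mat \<Rightarrow> complex list" where
  "eigenvalue_list A = (SOME as. char_poly A = (\<Prod>a\<leftarrow>as. [:- a, 1:]))"

text \<open>Singular values s_1(T) \<ge> ... \<ge> s_n(T): the eigenvalues of |T| (which are real),
  in non-increasing order.  sing_val T j is s_j(T) for 1 \<le> j \<le> n.\<close>
definition sing_vals :: "complex mat \<Rightarrow> real list" where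
  "sing_vals T = rev (sort (map Re (eigenvalue_list (mat_abs T))))"

definition sing_val :: "complex mat \<Rightarrow> nat \<Rightarrow> real" where
  "sing_val T j = sing_vals T ! (j - 1)"

definition op_norm :: "complex mat \<Rightarrow> real" where
  "op_norm T = sing_val T 1"

definition schatten_norm :: "real \<Rightarrow> complex mat \<Rightarrow> real" where
  "schatten_norm p T = (\<Sum>j=1..dim_row T. sing_val T j powr p) powr (1 / p)"

end

(* Kittaneh's mixed Cauchy-Schwarz inequality
     |<T x, y>|^2 <= <f^2(|T|) x, x> <g^2(|T*|) y, y>,
   applied to T and to S with y = (T + S) x and combined with the Cauchy-Schwarz inequality
   in R^2, gives for P = f^2(|T|) + e^2(|S|) and Q = g^2(|T*|) + h^2(|S*|)
     |(T + S) x|^4 <= <P x, x> <Q y, y> <= ||Q|| <P x, x> |(T + S) x|^2,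
   that is |T + S|^2 <= ||Q|| P as quadratic forms.  Weyl's monotonicity principle turns this
   into s_j(T + S)^2 <= ||Q|| s_j(P), and summing (p/2)-th powers gives the Schatten norm bound.
   The mixed inequality itself comes from a singular value decomposition: W* T V only connects
   equal singular values, so it factors as g(D') N f(D) with a contraction N. *)

theory Submission
  imports Defs "HOL-Analysis.L2_Norm"
begin

notation mat_adjoint (\<open>_\<^sup>H\<close> [1000] 999)

lemma mat_adjoint_eq: "(A::complex mat)\<^sup>H = mat (dim_col A) (dim_row A) (\<lambda>(i,j). cnj (A $$ (j,i)))"
  by (rule eq_matI) (auto simp: mat_adjoint_def mat_of_rows_def)

lemma mat_adjoint_dim [simp]:
  "dim_row ((A::complex mat)\<^sup>H) = dim_col A" "dim_col ((A::complex mat)\<^sup>H) = dim_row A"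
  by (auto simp: mat_adjoint_eq)

lemma mat_adjoint_index [simp]:
  "i < dim_col A \<Longrightarrow> j < dim_row A \<Longrightarrow> (A::complex mat)\<^sup>H $$ (i,j) = cnj (A $$ (j,i))"
  by (auto simp: mat_adjoint_eq)

lemma mat_adjoint_carrier [simp]: "(A::complex mat) \<in> carrier_mat n m \<Longrightarrow> A\<^sup>H \<in> carrier_mat m n"
  by (auto simp: mat_adjoint_eq)

lemma mat_adjoint_mult_vec_carrier [simp]:
  "(A::complex mat) \<in> carrier_mat n m \<Longrightarrow> x \<in> carrier_vec n \<Longrightarrow> A\<^sup>H *\<^sub>v x \<in> carrier_vec m"
  by (rule mult_mat_vec_carrier[OF mat_adjoint_carrier])

lemma mat_adjoint_adjoint [simp]: "((A::complex mat)\<^sup>H)\<^sup>H = A"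
  by (rule eq_matI) (auto simp: mat_adjoint_eq)

lemma mat_adjoint_mult:
  assumes "(A::complex mat) \<in> carrier_mat n m" "B \<in> carrier_mat m k"
  shows "(A * B)\<^sup>H = B\<^sup>H * A\<^sup>H"
  by (rule eq_matI) (use assms in \<open>auto simp: scalar_prod_def intro!: sum.cong\<close>)

lemma mat_adjoint_add:
  assumes "(A::complex mat) \<in> carrier_mat n m" "B \<in> carrier_mat n m"
  shows "(A + B)\<^sup>H = A\<^sup>H + B\<^sup>H"
  by (rule eq_matI) (use assms in auto)

lemma adjoint_mult_index:
  assumes "(A::complex mat) \<in> carrier_mat n m" "B \<in> carrier_mat n k" "i < m" "j < k"
  shows "(A\<^sup>H * B) $$ (i,j) = col B j \<bullet>c col A i"
  using assms by (auto simp: scalar_prod_def intro!: sum.cong)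

lemma square_mat_assoc:
  "(A::complex mat) \<in> carrier_mat n n \<Longrightarrow> B \<in> carrier_mat n n \<Longrightarrow> C \<in> carrier_mat n n \<Longrightarrow>
    A * B * C = A * (B * C)"
  by (rule assoc_mult_mat[of _ n n _ n _ n])

lemma square_mat_mult_carrier:
  "(A::complex mat) \<in> carrier_mat n n \<Longrightarrow> B \<in> carrier_mat n n \<Longrightarrow> A * B \<in> carrier_mat n n"
  by auto

lemmas square_mat_simps = square_mat_assoc square_mat_mult_carrier mat_adjoint_carrier
  right_mult_one_mat[of _ n n] left_mult_one_mat[of _ n n] for n

lemma mat_vec_assoc_square:
  "(A::complex mat) \<in> carrier_mat n n \<Longrightarrow> B \<in> carrier_mat n n \<Longrightarrow> x \<in> carrier_vec n \<Longrightarrow>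
    A * B *\<^sub>v x = A *\<^sub>v (B *\<^sub>v x)"
  by (rule assoc_mult_mat_vec[of _ n n _ n])

definition real_diag :: "real list \<Rightarrow> complex mat" where
  "real_diag d = diag_of_list (map complex_of_real d)"

lemma real_diag_carrier [simp]: "real_diag d \<in> carrier_mat (length d) (length d)"
  and real_diag_dim [simp]: "dim_row (real_diag d) = length d" "dim_col (real_diag d) = length d"
  by (auto simp: real_diag_def diag_of_list_def)

lemma real_diag_carrier': "length d = n \<Longrightarrow> real_diag d \<in> carrier_mat n n"
  by auto

lemma real_diag_index [simp]:
  "i < length d \<Longrightarrow> j < length d \<Longrightarrow>
    real_diag d $$ (i,j) = (if i = j then complex_of_real (d!i) else 0)"
  by (auto simp: real_diag_def diag_of_list_def)

lemma real_diag_adjoint [simp]: "(real_diag d)\<^sup>H = real_diag d"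
  by (rule eq_matI) auto

lemma mult_real_diag_index:
  assumes "X \<in> carrier_mat m (length d)" "k < m" "i < length d"
  shows "(X * real_diag d) $$ (k,i) = X $$ (k,i) * d ! i"
proof -
  have "(X * real_diag d) $$ (k,i) = (\<Sum>l<length d. X $$ (k,l) * real_diag d $$ (l,i))"
    using assms by (auto simp: scalar_prod_def atLeast0LessThan)
  also have "\<dots> = (\<Sum>l<length d. if l = i then X $$ (k,i) * d ! i else 0)"
    using assms by (intro sum.cong) auto
  finally show ?thesis using assms by simp
qed

lemma real_diag_mult_index:
  assumes "X \<in> carrier_mat (length d) m" "k < length d" "i < m"
  shows "(real_diag d * X) $$ (k,i) = d ! k * X $$ (k,i)"
proof -
  have "(real_diag d * X) $$ (k,i) = (\<Sum>l<length d. real_diag d $$ (k,l) * X $$ (l,i))"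
    using assms by (auto simp: scalar_prod_def atLeast0LessThan)
  also have "\<dots> = (\<Sum>l<length d. if l = k then d ! k * X $$ (k,i) else 0)"
    using assms by (intro sum.cong) auto
  finally show ?thesis using assms by simp
qed

lemma real_diag_mult_vec_index:
  assumes "u \<in> carrier_vec (length c)" "i < length c"
  shows "(real_diag c *\<^sub>v u) $ i = c ! i * u $ i"
proof -
  have "(real_diag c *\<^sub>v u) $ i = (\<Sum>k<length c. real_diag c $$ (i,k) * u $ k)"
    using assms by (auto simp: scalar_prod_def atLeast0LessThan)
  also have "\<dots> = (\<Sum>k<length c. if k = i then c ! i * u $ i else 0)"
    using assms by (intro sum.cong) auto
  finally show ?thesis using assms by simp
qed

lemma real_diag_mult_real_diag:
  assumes "length c = length d"
  shows "real_diag c * real_diag d = real_diag (map2 (*) c d)"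
proof (rule eq_matI)
  fix i j assume "i < dim_row (real_diag (map2 (*) c d))" "j < dim_col (real_diag (map2 (*) c d))"
  then show "(real_diag c * real_diag d) $$ (i, j) = real_diag (map2 (*) c d) $$ (i, j)"
    using assms mult_real_diag_index[of "real_diag c" "length d" d i j]
      real_diag_carrier'[of c "length d"]
    by auto
qed (use assms in auto)

lemma unitary_mat_carrier: "unitary_mat n U \<Longrightarrow> U \<in> carrier_mat n n"
  by (simp add: unitary_mat_def)

lemma unitary_matD:
  "unitary_mat n U \<Longrightarrow> U\<^sup>H * U = 1\<^sub>m n" "unitary_mat n U \<Longrightarrow> U * U\<^sup>H = 1\<^sub>m n"
  by (auto simp: unitary_mat_def)

lemma unitary_mat_cancel:
  assumes "unitary_mat n U" "X \<in> carrier_mat n n"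
  shows "U\<^sup>H * (U * X) = X" "U * (U\<^sup>H * X) = X"
  using assms unfolding unitary_mat_def by (auto simp: square_mat_assoc[of _ n, symmetric])

lemma unitary_mat_cancel_vec:
  assumes "unitary_mat n U" "x \<in> carrier_vec n"
  shows "U\<^sup>H *\<^sub>v (U *\<^sub>v x) = x" "U *\<^sub>v (U\<^sup>H *\<^sub>v x) = x"
  using assms unfolding unitary_mat_def by (auto simp: assoc_mult_mat_vec[of _ n n _ n, symmetric])

lemma unitary_mat_mult:
  assumes U: "unitary_mat n U" and V: "unitary_mat n V"
  shows "unitary_mat n (U * V)"
proof -
  have Uc: "U \<in> carrier_mat n n" and Vc: "V \<in> carrier_mat n n"
    using U V unitary_mat_carrier by auto
  have "(U * V)\<^sup>H * (U * V) = V\<^sup>H * (U\<^sup>H * (U * V))" and "U * V * (U * V)\<^sup>H = U * (V * (V\<^sup>H * U\<^sup>H))"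
    using Uc Vc by (simp_all add: mat_adjoint_mult square_mat_simps[where n=n])
  then show ?thesis
    using U V Uc Vc unitary_mat_cancel[OF V, of "U\<^sup>H"]
    by (simp add: unitary_mat_def unitary_mat_cancel)
qed

subsection \<open>The functional calculus\<close>

text \<open>A unitary matrix intertwining two real diagonal matrices only connects equal eigenvalues,
  so it also intertwines any function of them.\<close>

lemma unitary_diag_conj_map:
  assumes U: "unitary_mat n U" and V: "unitary_mat n V" and d: "length d = n" and c: "length c = n"
    and eq: "U * real_diag d * U\<^sup>H = V * real_diag c * V\<^sup>H"
  shows "U * real_diag (map \<phi> d) * U\<^sup>H = V * real_diag (map \<phi> c) * V\<^sup>H"
proof -
  have [simp]: "U \<in> carrier_mat n n" "V \<in> carrier_mat n n"
    "real_diag d \<in> carrier_mat n n" "real_diag c \<in> carrier_mat n n"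
    "real_diag (map \<phi> d) \<in> carrier_mat n n" "real_diag (map \<phi> c) \<in> carrier_mat n n"
    using U V d c unitary_mat_carrier by auto
  define X where "X = V\<^sup>H * U"
  have Xc[simp]: "X \<in> carrier_mat n n"
    unfolding X_def using mult_carrier_mat[OF mat_adjoint_carrier[of V n n]] by simp
  have "X * real_diag d = V\<^sup>H * (U * real_diag d * U\<^sup>H) * U"
    unfolding X_def using U
    by (simp add: square_mat_simps[where n=n] unitary_mat_cancel unitary_matD)
  also have "\<dots> = real_diag c * X"
    unfolding eq X_def using V by (simp add: square_mat_simps[where n=n] unitary_mat_cancel)
  finally have XD: "X * real_diag d = real_diag c * X" .
  have XD\<phi>: "X * real_diag (map \<phi> d) = real_diag (map \<phi> c) * X"
  proof (rule eq_matI)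
    fix k i assume "k < dim_row (real_diag (map \<phi> c) * X)" "i < dim_col (real_diag (map \<phi> c) * X)"
    hence k: "k < n" and i: "i < n" using c Xc by auto
    from arg_cong[OF XD, of "\<lambda>M. M $$ (k,i)"]
    have "X $$ (k,i) * d ! i = c ! k * X $$ (k,i)"
      using k i d c mult_real_diag_index[of X n d k i] real_diag_mult_index[of X c n k i] by simp
    then have "X $$ (k,i) * \<phi> (d ! i) = \<phi> (c ! k) * X $$ (k,i)"
      by (cases "X $$ (k,i) = 0") (auto simp: mult.commute)
    then show "(X * real_diag (map \<phi> d)) $$ (k, i) = (real_diag (map \<phi> c) * X) $$ (k, i)"
      using k i d c mult_real_diag_index[of X n "map \<phi> d" k i]
        real_diag_mult_index[of X "map \<phi> c" n k i] by simp
  qed (use d c Xc[unfolded carrier_mat_def] in auto)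
  have "U * real_diag (map \<phi> d) * U\<^sup>H = V * (X * real_diag (map \<phi> d)) * U\<^sup>H"
    unfolding X_def using V by (simp add: square_mat_simps[where n=n] unitary_mat_cancel)
  also have "\<dots> = V * (real_diag (map \<phi> c) * X) * U\<^sup>H" by (simp only: XD\<phi>)
  also have "\<dots> = V * real_diag (map \<phi> c) * V\<^sup>H"
    unfolding X_def using U
    by (simp add: square_mat_simps[where n=n] unitary_mat_cancel unitary_matD)
  finally show ?thesis .
qed

lemma mat_fun_spectral:
  assumes U: "unitary_mat n U" and d: "length d = n" and A: "A = U * real_diag d * U\<^sup>H"
  shows "mat_fun \<phi> A = U * real_diag (map \<phi> d) * U\<^sup>H"
proof -
  have dimA: "dim_row A = n" using A U d unitary_mat_carrier by auto
  let ?P = "\<lambda>B. \<exists>U d. unitary_mat (dim_row A) U \<and> length d = dim_row A \<and>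
      A = U * diag_of_list (map complex_of_real d) * U\<^sup>H \<and>
      B = U * diag_of_list (map (\<lambda>x. complex_of_real (\<phi> x)) d) * U\<^sup>H"
  have "?P (U * real_diag (map \<phi> d) * U\<^sup>H)"
    using U d A dimA unfolding real_diag_def by (auto simp: o_def)
  hence "?P (mat_fun \<phi> A)" unfolding mat_fun_def by (rule someI)
  then obtain V c where V: "unitary_mat n V" and c: "length c = n"
    and AV: "A = V * real_diag c * V\<^sup>H" and B: "mat_fun \<phi> A = V * real_diag (map \<phi> c) * V\<^sup>H"
    unfolding dimA real_diag_def by (auto simp: o_def)
  show ?thesis
    unfolding B by (rule unitary_diag_conj_map[OF V U c d]) (use A AV in simp)
qed

definition sq_norm_vec :: "complex vec \<Rightarrow> real" where
  "sq_norm_vec x = (\<Sum>i<dim_vec x. (cmod (x$i))\<^sup>2)"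

text \<open>Only the real part of \<open>\<langle>A x, x\<rangle>\<close> is kept; it is the whole value for Hermitian \<open>A\<close>.\<close>

definition quad_form :: "complex mat \<Rightarrow> complex vec \<Rightarrow> real" where
  "quad_form A x = Re ((A *\<^sub>v x) \<bullet>c x)"

lemma sq_norm_vec_nonneg: "0 \<le> sq_norm_vec x"
  unfolding sq_norm_vec_def by (auto intro: sum_nonneg)

lemma cscalar_prod_self: "x \<bullet>c x = complex_of_real (sq_norm_vec x)"
  unfolding scalar_prod_def sq_norm_vec_def of_real_sum
  by (auto simp: atLeast0LessThan complex_norm_square simp del: of_real_power intro!: sum.cong)

lemma sq_norm_vec_pos:
  assumes "x \<in> carrier_vec n" "x \<noteq> 0\<^sub>v n"
  shows "0 < sq_norm_vec x"
  using conjugate_square_greater_0_vec[OF assms(1)] assms(2)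
  by (simp add: cscalar_prod_self less_complex_def)

lemma cscalar_prod_smult:
  assumes "(x::complex vec) \<in> carrier_vec n" "y \<in> carrier_vec n"
  shows "(a \<cdot>\<^sub>v x) \<bullet>c (b \<cdot>\<^sub>v y) = a * cnj b * (x \<bullet>c y)"
  using assms by (auto simp: scalar_prod_def sum_distrib_left intro!: sum.cong)

lemma cscalar_prod_adjoint:
  assumes A: "(A::complex mat) \<in> carrier_mat n m"
    and x: "x \<in> carrier_vec m" and y: "y \<in> carrier_vec n"
  shows "(A *\<^sub>v x) \<bullet>c y = x \<bullet>c (A\<^sup>H *\<^sub>v y)"
proof -
  have "(A *\<^sub>v x) \<bullet>c y = (\<Sum>i<n. \<Sum>k<m. A $$ (i,k) * x $ k * cnj (y $ i))"
    using A x y by (auto simp: scalar_prod_def atLeast0LessThan sum_distrib_right intro!: sum.cong)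
  also have "\<dots> = (\<Sum>k<m. \<Sum>i<n. A $$ (i,k) * x $ k * cnj (y $ i))"
    by (rule sum.swap)
  also have "\<dots> = x \<bullet>c (A\<^sup>H *\<^sub>v y)"
    using A x y by (auto simp: scalar_prod_def atLeast0LessThan sum_distrib_left ac_simps
        intro!: sum.cong)
  finally show ?thesis .
qed

lemma sq_norm_vec_unitary:
  assumes U: "unitary_mat n U" and x: "x \<in> carrier_vec n"
  shows "sq_norm_vec (U\<^sup>H *\<^sub>v x) = sq_norm_vec x"
proof -
  have Uc: "U \<in> carrier_mat n n" using U unitary_mat_carrier by auto
  have "(U\<^sup>H *\<^sub>v x) \<bullet>c (U\<^sup>H *\<^sub>v x) = x \<bullet>c (U *\<^sub>v (U\<^sup>H *\<^sub>v x))"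
    using cscalar_prod_adjoint[of "U\<^sup>H" n n x "U\<^sup>H *\<^sub>v x"] Uc x by auto
  then show ?thesis
    unfolding unitary_mat_cancel_vec(2)[OF U x] cscalar_prod_self by simp
qed

lemma quad_form_add:
  assumes "A \<in> carrier_mat n n" "B \<in> carrier_mat n n" "x \<in> carrier_vec n"
  shows "quad_form (A + B) x = quad_form A x + quad_form B x"
  using assms unfolding quad_form_def
  by (simp add: add_mult_distrib_mat_vec[of _ n n] add_scalar_prod_distrib[of _ n])

lemma quad_form_adjoint_mult_self:
  assumes M: "M \<in> carrier_mat n n" and x: "x \<in> carrier_vec n"
  shows "quad_form (M\<^sup>H * M) x = sq_norm_vec (M *\<^sub>v x)"
proof -
  have "(M\<^sup>H * M) *\<^sub>v x = M\<^sup>H *\<^sub>v (M *\<^sub>v x)"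
    using M x by (simp add: mat_vec_assoc_square[of _ n])
  moreover have "(M\<^sup>H *\<^sub>v (M *\<^sub>v x)) \<bullet>c x = (M *\<^sub>v x) \<bullet>c (M *\<^sub>v x)"
    using cscalar_prod_adjoint[of "M\<^sup>H" n n "M *\<^sub>v x" x] M x by simp
  ultimately show ?thesis
    unfolding quad_form_def cscalar_prod_self by simp
qed

lemma quad_form_real_diag:
  assumes u: "u \<in> carrier_vec (length c)"
  shows "quad_form (real_diag c) u = (\<Sum>i<length c. c ! i * (cmod (u $ i))\<^sup>2)"
proof -
  have "(real_diag c *\<^sub>v u) \<bullet>c u = (\<Sum>i<length c. c ! i * (u $ i * cnj (u $ i)))"
    using u by (auto simp: scalar_prod_def atLeast0LessThan real_diag_mult_vec_index
        simp del: index_mult_mat_vec intro!: sum.cong)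
  then show ?thesis
    unfolding quad_form_def complex_norm_square[symmetric] of_real_sum by (simp del: of_real_power)
qed

lemma sq_norm_real_diag_mult_vec:
  assumes "u \<in> carrier_vec (length c)"
  shows "sq_norm_vec (real_diag c *\<^sub>v u) = (\<Sum>i<length c. (c ! i)\<^sup>2 * (cmod (u $ i))\<^sup>2)"
  using assms by (auto simp: sq_norm_vec_def real_diag_mult_vec_index norm_mult power_mult_distrib
      simp del: index_mult_mat_vec intro!: sum.cong)

lemma quad_form_spectral:
  assumes U: "unitary_mat n U" and c: "length c = n" and x: "x \<in> carrier_vec n"
  shows "quad_form (U * real_diag c * U\<^sup>H) x = (\<Sum>i<n. c ! i * (cmod ((U\<^sup>H *\<^sub>v x) $ i))\<^sup>2)"
proof -
  have Uc: "U \<in> carrier_mat n n" and Dc: "real_diag c \<in> carrier_mat n n"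
    using U c unitary_mat_carrier by auto
  have Ux: "U\<^sup>H *\<^sub>v x \<in> carrier_vec n" using Uc x by auto
  have "(U * real_diag c * U\<^sup>H) *\<^sub>v x = U *\<^sub>v (real_diag c *\<^sub>v (U\<^sup>H *\<^sub>v x))"
    using Uc Dc x Ux by (simp add: mat_vec_assoc_square[of _ n])
  then have "((U * real_diag c * U\<^sup>H) *\<^sub>v x) \<bullet>c x = (real_diag c *\<^sub>v (U\<^sup>H *\<^sub>v x)) \<bullet>c (U\<^sup>H *\<^sub>v x)"
    using cscalar_prod_adjoint[OF Uc _ x, of "real_diag c *\<^sub>v (U\<^sup>H *\<^sub>v x)"] Dc Ux by auto
  then show ?thesis
    using quad_form_real_diag[of "U\<^sup>H *\<^sub>v x" c] Ux c by (simp add: quad_form_def)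
qed

lemma cscalar_prod_cauchy_schwarz:
  assumes x: "x \<in> carrier_vec n" and y: "y \<in> carrier_vec n"
  shows "(cmod (x \<bullet>c y))\<^sup>2 \<le> sq_norm_vec x * sq_norm_vec y"
proof -
  have "cmod (x \<bullet>c y) \<le> (\<Sum>i<n. cmod (x $ i) * cmod (y $ i))"
    using x y norm_sum[of "\<lambda>i. x $ i * cnj (y $ i)" "{..<n}"]
    by (simp add: scalar_prod_def atLeast0LessThan norm_mult)
  also have "\<dots> \<le> L2_set (\<lambda>i. cmod (x $ i)) {..<n} * L2_set (\<lambda>i. cmod (y $ i)) {..<n}"
    using L2_set_mult_ineq[of "\<lambda>i. cmod (x $ i)" "\<lambda>i. cmod (y $ i)" "{..<n}"] by simp
  finally have "(cmod (x \<bullet>c y))\<^sup>2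
      \<le> (L2_set (\<lambda>i. cmod (x $ i)) {..<n} * L2_set (\<lambda>i. cmod (y $ i)) {..<n})\<^sup>2"
    by (simp add: power_mono)
  also have "\<dots> = sq_norm_vec x * sq_norm_vec y"
    using x y by (simp add: power_mult_distrib L2_set_def sq_norm_vec_def sum_nonneg)
  finally show ?thesis .
qed

subsection \<open>The spectral theorem for Hermitian matrices\<close>

lemma unitary_mat_of_corthogonal:
  assumes ws: "set ws \<subseteq> carrier_vec n" "corthogonal ws" "length ws = n"
  shows "unitary_mat n
    (mat_of_cols n (map (\<lambda>w. complex_of_real (1 / sqrt (sq_norm_vec w)) \<cdot>\<^sub>v w) ws))"
    (is "unitary_mat n ?W")
proof -
  define r where "r i = 1 / sqrt (sq_norm_vec (ws ! i))" for i
  have wsc: "i < n \<Longrightarrow> ws ! i \<in> carrier_vec n" for i using ws by auto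
  have W: "?W \<in> carrier_mat n n" using ws by auto
  have colW: "i < n \<Longrightarrow> col ?W i = complex_of_real (r i) \<cdot>\<^sub>v ws ! i" for i
    using ws wsc by (simp add: r_def)
  have WW: "?W\<^sup>H * ?W = 1\<^sub>m n"
  proof (rule eq_matI)
    fix i j assume "i < dim_row (1\<^sub>m n)" "j < dim_col (1\<^sub>m n)"
    hence i: "i < n" and j: "j < n" by auto
    have "(?W\<^sup>H * ?W) $$ (i,j) = complex_of_real (r j * r i) * (ws ! j \<bullet>c ws ! i)"
      using adjoint_mult_index[OF W W i j] colW[OF i] colW[OF j]
        cscalar_prod_smult[OF wsc[OF j] wsc[OF i]] by simp
    also have "\<dots> = 1\<^sub>m n $$ (i,j)"
    proof (cases "i = j")
      case True
      have "ws ! i \<bullet>c ws ! i \<noteq> 0" using corthogonalD[OF ws(2), of i i] ws(3) i by auto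
      then have "0 < sq_norm_vec (ws ! i)"
        using sq_norm_vec_nonneg[of "ws ! i"] by (auto simp: cscalar_prod_self)
      then have "r i * r i * sq_norm_vec (ws ! i) = 1" by (simp add: r_def)
      then show ?thesis
        using True i by (simp add: cscalar_prod_self flip: of_real_mult)
    next
      case False
      then show ?thesis using corthogonalD[OF ws(2), of j i] ws(3) i j by auto
    qed
    finally show "(?W\<^sup>H * ?W) $$ (i,j) = 1\<^sub>m n $$ (i,j)" .
  qed (use W in auto)
  then have "?W * ?W\<^sup>H = 1\<^sub>m n"
    using mat_mult_left_right_inverse[OF mat_adjoint_carrier[OF W] W] by simp
  then show ?thesis using W WW by (simp add: unitary_mat_def)
qed

lemma unitary_mat_first_col:
  assumes v: "v \<in> carrier_vec n" and v0: "v \<noteq> 0\<^sub>v n"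
  obtains W c where "unitary_mat n W" "col W 0 = c \<cdot>\<^sub>v v"
proof -
  interpret cof_vec_space n "TYPE(complex)" .
  define b where "b = basis_completion v"
  from basis_completion[OF v v0, folded b_def]
  have b: "distinct b" "\<not> lin_dep (set b)" "set b \<subseteq> carrier_vec n" "hd b = v" "length b = n"
    by auto
  have n: "0 < n" using v v0 by (metis carrier_vecD gr0I vec_of_dim_0 zero_carrier_vec)
  then obtain vs where bv: "b = v # vs" using b by (cases b) auto
  define ws where "ws = gram_schmidt n b"
  have ws: "set ws \<subseteq> carrier_vec n" "corthogonal ws" "length ws = n"
    using gram_schmidt_result[OF b(3,1,2) ws_def] b(5) by auto
  have "ws ! 0 = v"
    using gram_schmidt_hd[OF v, of vs] ws(3) n unfolding ws_def bv
    by (cases "gram_schmidt n (v # vs)") auto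
  then have "col (mat_of_cols n (map (\<lambda>w. complex_of_real (1 / sqrt (sq_norm_vec w)) \<cdot>\<^sub>v w) ws)) 0
      = complex_of_real (1 / sqrt (sq_norm_vec v)) \<cdot>\<^sub>v v"
    using ws n by (subst col_mat_of_cols) auto
  then show ?thesis
    using that[OF unitary_mat_of_corthogonal[OF ws]] by blast
qed

lemma unitary_mat_eigenvector_first_col:
  assumes A: "(A::complex mat) \<in> carrier_mat (Suc m) (Suc m)"
  obtains W e where "unitary_mat (Suc m) W" "A *\<^sub>v col W 0 = e \<cdot>\<^sub>v col W 0"
proof -
  obtain as where cp: "char_poly A = (\<Prod>a\<leftarrow>as. [:- a, 1:])" and "length as = Suc m"
    using char_poly_factorized[OF A] by auto
  then obtain e es where "as = e # es" by (cases as) auto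
  then have "eigenvalue A e" using eigenvalue_root_char_poly[OF A] cp by simp
  then obtain v where "eigenvector A v e" using find_eigenvector[OF A] by auto
  then have v: "v \<in> carrier_vec (Suc m)" "v \<noteq> 0\<^sub>v (Suc m)" and Av: "A *\<^sub>v v = e \<cdot>\<^sub>v v"
    using A unfolding eigenvector_def by auto
  obtain W c where W: "unitary_mat (Suc m) W" and colW: "col W 0 = c \<cdot>\<^sub>v v"
    using unitary_mat_first_col[OF v] .
  have "A *\<^sub>v col W 0 = e \<cdot>\<^sub>v col W 0"
    unfolding colW mult_mat_vec[OF A v(1)] Av by (simp add: smult_smult_assoc mult.commute)
  then show ?thesis using that W by blast
qed

definition block_diag1 :: "complex \<Rightarrow> complex mat \<Rightarrow> complex mat" where
  "block_diag1 c X = mat (Suc (dim_row X)) (Suc (dim_col X))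
     (\<lambda>(i,j). if i = 0 \<and> j = 0 then c else if i = 0 \<or> j = 0 then 0 else X $$ (i - 1, j - 1))"

lemma block_diag1_carrier [simp]:
  "X \<in> carrier_mat m k \<Longrightarrow> block_diag1 c X \<in> carrier_mat (Suc m) (Suc k)"
  by (auto simp: block_diag1_def)

lemma block_diag1_mult:
  assumes X: "X \<in> carrier_mat m k" and Y: "Y \<in> carrier_mat k l"
  shows "block_diag1 a X * block_diag1 b Y = block_diag1 (a * b) (X * Y)"
proof (rule eq_matI)
  fix i j
  assume "i < dim_row (block_diag1 (a * b) (X * Y))" "j < dim_col (block_diag1 (a * b) (X * Y))"
  then have i: "i < Suc m" and j: "j < Suc l" using X Y by (auto simp: block_diag1_def)
  have "(block_diag1 a X * block_diag1 b Y) $$ (i,j)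
      = (\<Sum>t<Suc k. block_diag1 a X $$ (i,t) * block_diag1 b Y $$ (t,j))"
    using X Y i j by (auto simp: block_diag1_def scalar_prod_def atLeast0LessThan)
  also have "\<dots> = block_diag1 a X $$ (i,0) * block_diag1 b Y $$ (0,j)
      + (\<Sum>t<k. block_diag1 a X $$ (i,Suc t) * block_diag1 b Y $$ (Suc t,j))"
    by (rule sum.lessThan_Suc_shift)
  also have "\<dots> = block_diag1 (a * b) (X * Y) $$ (i,j)"
    using X Y i j
    by (cases i; cases j) (auto simp: block_diag1_def scalar_prod_def atLeast0LessThan)
  finally show "(block_diag1 a X * block_diag1 b Y) $$ (i, j)
      = block_diag1 (a * b) (X * Y) $$ (i, j)" .
qed (use X Y in \<open>auto simp: block_diag1_def\<close>)

lemma block_diag1_adjoint: "(block_diag1 c X)\<^sup>H = block_diag1 (cnj c) (X\<^sup>H)"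
  by (rule eq_matI) (auto simp: block_diag1_def)

lemma block_diag1_real_diag: "block_diag1 (complex_of_real x) (real_diag d) = real_diag (x # d)"
  by (rule eq_matI) (auto simp: block_diag1_def nth_Cons')

lemma unitary_mat_block_diag1:
  assumes "unitary_mat m U"
  shows "unitary_mat (Suc m) (block_diag1 1 U)"
proof -
  have "block_diag1 1 (1\<^sub>m m) = 1\<^sub>m (Suc m)"
    by (rule eq_matI) (auto simp: block_diag1_def)
  then show ?thesis
    using assms unfolding unitary_mat_def
    by (auto simp: block_diag1_adjoint block_diag1_mult[of U m m "U\<^sup>H" m]
        block_diag1_mult[of "U\<^sup>H" m m U m])
qed

lemma hermitian_deflation:
  assumes A: "A \<in> carrier_mat (Suc m) (Suc m)" and hA: "A\<^sup>H = A" and W: "unitary_mat (Suc m) W"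
    and ev: "A *\<^sub>v col W 0 = e \<cdot>\<^sub>v col W 0"
  obtains B where "B \<in> carrier_mat m m" "B\<^sup>H = B"
    "W\<^sup>H * A * W = block_diag1 (complex_of_real (Re e)) B"
proof -
  let ?n = "Suc m"
  have Wc: "W \<in> carrier_mat ?n ?n" using W unitary_mat_carrier by auto
  define A' where "A' = W\<^sup>H * A * W"
  have A'c: "A' \<in> carrier_mat ?n ?n" unfolding A'_def using Wc A by auto
  have hA': "A'\<^sup>H = A'"
    unfolding A'_def using Wc A hA
    by (simp add: mat_adjoint_mult[of _ ?n ?n _ ?n] square_mat_simps[where n="?n"])
  have col0: "i < ?n \<Longrightarrow> A' $$ (i,0) = (if i = 0 then e else 0)" for i
  proof -
    assume i: "i < ?n"
    have "col (A * W) 0 = e \<cdot>\<^sub>v col W 0" using ev by (subst col_mult2[OF A Wc]) simp_all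
    then have "A' $$ (i,0) = e * (W\<^sup>H * W) $$ (i,0)"
      unfolding A'_def using i A Wc by (simp add: square_mat_simps[where n="?n"])
    then show ?thesis using W i by (simp add: unitary_matD)
  qed
  have row0: "j < ?n \<Longrightarrow> A' $$ (0,j) = (if j = 0 then cnj e else 0)" for j
    using col0[of j] A'c arg_cong[OF hA', of "\<lambda>M. M $$ (0,j)"] by auto
  have e: "e = complex_of_real (Re e)"
    using col0[of 0] row0[of 0] by (simp add: complex_eq_iff)
  define B where "B = mat m m (\<lambda>(i,j). A' $$ (Suc i, Suc j))"
  have Bc: "B \<in> carrier_mat m m" unfolding B_def by auto
  have "B\<^sup>H = B"
  proof (rule eq_matI)
    fix i j assume "i < dim_row B" "j < dim_col B"
    then show "B\<^sup>H $$ (i, j) = B $$ (i, j)"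
      using Bc A'c arg_cong[OF hA', of "\<lambda>M. M $$ (Suc i, Suc j)"]
      by (auto simp: B_def)
  qed (use Bc in auto)
  moreover have "A' = block_diag1 (complex_of_real (Re e)) B"
  proof (rule eq_matI)
    fix i j assume "i < dim_row (block_diag1 (complex_of_real (Re e)) B)"
      "j < dim_col (block_diag1 (complex_of_real (Re e)) B)"
    then have i: "i < ?n" and j: "j < ?n" using Bc by (auto simp: block_diag1_def)
    show "A' $$ (i,j) = block_diag1 (complex_of_real (Re e)) B $$ (i,j)"
      using col0[OF i] row0[OF j] i j Bc e by (cases i; cases j) (auto simp: block_diag1_def B_def)
  qed (use Bc A'c in \<open>auto simp: block_diag1_def\<close>)
  ultimately show ?thesis using that Bc unfolding A'_def by blast
qed

theorem hermitian_spectral: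
  assumes "A \<in> carrier_mat n n" "A\<^sup>H = A"
  shows "\<exists>U d. unitary_mat n U \<and> length d = n \<and> A = U * real_diag d * U\<^sup>H"
  using assms
proof (induction n arbitrary: A)
  case 0
  then have "A = 1\<^sub>m 0 * real_diag [] * (1\<^sub>m 0)\<^sup>H" by (intro eq_matI) auto
  moreover have "unitary_mat 0 (1\<^sub>m 0)" by (auto simp: unitary_mat_def)
  ultimately show ?case by fastforce
next
  case (Suc m A)
  let ?n = "Suc m"
  have A: "A \<in> carrier_mat ?n ?n" and hA: "A\<^sup>H = A" using Suc by auto
  obtain W e where W: "unitary_mat ?n W" and "A *\<^sub>v col W 0 = e \<cdot>\<^sub>v col W 0"
    using unitary_mat_eigenvector_first_col[OF A] .
  then obtain B where Bc: "B \<in> carrier_mat m m" and hB: "B\<^sup>H = B"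
    and AB: "W\<^sup>H * A * W = block_diag1 (complex_of_real (Re e)) B"
    using hermitian_deflation[OF A hA W] by blast
  from Suc.IH[OF Bc hB] obtain V d where V: "unitary_mat m V" and d: "length d = m"
    and BV: "B = V * real_diag d * V\<^sup>H" by auto
  have Wc: "W \<in> carrier_mat ?n ?n" and Vc: "V \<in> carrier_mat m m"
    and Dc: "real_diag d \<in> carrier_mat m m"
    using W V d unitary_mat_carrier by auto
  define U where "U = W * block_diag1 1 V"
  have U: "unitary_mat ?n U"
    unfolding U_def using unitary_mat_mult[OF W unitary_mat_block_diag1[OF V]] .
  have "W\<^sup>H * A * W = block_diag1 1 V * real_diag (Re e # d) * (block_diag1 1 V)\<^sup>H"
    unfolding AB BV using Vc Dc
    by (simp add: block_diag1_mult[of _ m m _ m] block_diag1_real_diag[symmetric]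
        block_diag1_adjoint)
  moreover have "A = W * (W\<^sup>H * A * W) * W\<^sup>H"
    using W A Wc by (simp add: square_mat_simps[where n="?n"] unitary_mat_cancel unitary_matD)
  moreover have "block_diag1 1 V \<in> carrier_mat ?n ?n" "real_diag (Re e # d) \<in> carrier_mat ?n ?n"
    using Vc d by auto
  ultimately have "A = U * real_diag (Re e # d) * U\<^sup>H"
    unfolding U_def using Wc
    by (simp add: square_mat_simps[where n="?n"] mat_adjoint_mult[of _ ?n ?n _ ?n])
  then show ?case using U d by (intro exI[of _ U] exI[of _ "Re e # d"]) auto
qed

lemma sorted_desc_nth_mono:
  fixes xs :: "'a :: linorder list"
  assumes "i \<le> k" "k < length xs"
  shows "rev (sort xs) ! k \<le> rev (sort xs) ! i"
  using assms by (simp add: rev_nth sorted_nth_mono)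

lemma nth_le_sorted_desc_0:
  fixes xs :: "'a :: linorder list"
  assumes "i < length xs"
  shows "xs ! i \<le> rev (sort xs) ! 0"
proof -
  have "xs ! i \<in> set (rev (sort xs))" using assms by simp
  then obtain k where "k < length xs" "rev (sort xs) ! k = xs ! i"
    unfolding in_set_conv_nth by auto
  then show ?thesis using sorted_desc_nth_mono[of 0 k xs] by simp
qed

lemma sorted_desc_map_mono:
  fixes f :: "'a :: linorder \<Rightarrow> 'b :: linorder"
  assumes "mono f" shows "rev (sort (map f xs)) = map f (rev (sort xs))"
proof -
  have "sort (map f xs) = map f (sort xs)"
  proof (rule properties_for_sort)
    show "sorted (map f (sort xs))"
      by (rule sorted_map_mono) (use assms in \<open>auto simp: mono_on_def mono_def\<close>)
  qed simp
  then show ?thesis by (simp add: rev_map)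
qed

lemma sort_mset_eq: "mset xs = mset ys \<Longrightarrow> sort xs = sort ys"
  using properties_for_sort[of "sort ys" xs] by simp

lemma proots_linear_factors: "proots (\<Prod>a\<leftarrow>as. [:- a, 1:]) = mset (as :: 'a :: idom list)"
proof (induction as)
  case (Cons a as)
  have "(\<Prod>a\<leftarrow>as. [:- a, 1:]) \<noteq> 0" by (auto simp: prod_list_zero_iff)
  then have "proots ([:- a, 1:] * (\<Prod>a\<leftarrow>as. [:- a, 1:])) = {#a#} + mset as"
    using proots_mult[of "[:- a, 1:]"] Cons.IH proots_linear_factor[of "- a"] by simp
  then show ?case by simp
qed simp

lemma eigenvalue_list_spectral:
  assumes U: "unitary_mat n U" and d: "length d = n" and A: "A = U * real_diag d * U\<^sup>H"
  shows "mset (eigenvalue_list A) = mset (map complex_of_real d)"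
proof -
  have Uc: "U \<in> carrier_mat n n" and Dc: "real_diag d \<in> carrier_mat n n"
    using U d unitary_mat_carrier by auto
  have "similar_mat_wit A (real_diag d) U (U\<^sup>H)"
    unfolding similar_mat_wit_def Let_def using Uc Dc A U by (auto simp: unitary_mat_def)
  then have "similar_mat A (real_diag d)" unfolding similar_mat_def by blast
  moreover have "upper_triangular (real_diag d)" by (auto simp: upper_triangular_def)
  moreover have "diag_mat (real_diag d) = map complex_of_real d"
    by (auto simp: diag_mat_def intro!: nth_equalityI)
  ultimately have cp: "char_poly A = (\<Prod>a\<leftarrow>map complex_of_real d. [:- a, 1:])"
    using char_poly_similar char_poly_upper_triangular[OF Dc] by metis
  then have "char_poly A = (\<Prod>a\<leftarrow>eigenvalue_list A. [:- a, 1:])"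
    unfolding eigenvalue_list_def by (rule someI)
  then show ?thesis
    using arg_cong[OF cp, of proots] by (simp only: proots_linear_factors)
qed

lemma sorted_eigenvalues_spectral:
  assumes "unitary_mat n U" "length d = n" "A = U * real_diag d * U\<^sup>H"
  shows "rev (sort (map Re (eigenvalue_list A))) = rev (sort d)"
proof -
  have "mset (map Re (eigenvalue_list A)) = mset (map Re (map complex_of_real d))"
    unfolding mset_map eigenvalue_list_spectral[OF assms] ..
  also have "map Re (map complex_of_real d) = d" by (induct d) auto
  finally show ?thesis using sort_mset_eq by metis
qed

lemma spectral_nonneg_of_quad_form_nonneg:
  assumes U: "unitary_mat n U" and d: "length d = n"
    and pos: "\<And>x. x \<in> carrier_vec n \<Longrightarrow> 0 \<le> quad_form (U * real_diag d * U\<^sup>H) x"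
  shows "\<forall>t\<in>set d. 0 \<le> t"
proof
  fix t assume "t \<in> set d"
  then obtain i where i: "i < n" and t: "t = d ! i" using d by (auto simp: in_set_conv_nth)
  have Uc: "U \<in> carrier_mat n n" using U unitary_mat_carrier by auto
  define x where "x = U *\<^sub>v unit_vec n i"
  have x: "x \<in> carrier_vec n" unfolding x_def using Uc by auto
  have "U\<^sup>H *\<^sub>v x = unit_vec n i" unfolding x_def using U by (simp add: unitary_mat_cancel_vec)
  then have "quad_form (U * real_diag d * U\<^sup>H) x = (\<Sum>k<n. if k = i then d ! i else 0)"
    unfolding quad_form_spectral[OF U d x] using i by (intro sum.cong) auto
  then show "0 \<le> t" using pos[OF x] t i by simp
qed

lemma sing_vals_spectral:
  assumes M: "M \<in> carrier_mat n n"
  obtains V d where "unitary_mat n V" "length d = n" "\<forall>t\<in>set d. 0 \<le> t"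
    "M\<^sup>H * M = V * real_diag d * V\<^sup>H" "mat_abs M = V * real_diag (map sqrt d) * V\<^sup>H"
    "sing_vals M = rev (sort (map sqrt d))"
proof -
  have "(M\<^sup>H * M)\<^sup>H = M\<^sup>H * M" using M by (simp add: mat_adjoint_mult[of "M\<^sup>H" n n M n])
  then obtain V d where V: "unitary_mat n V" and d: "length d = n"
    and MM: "M\<^sup>H * M = V * real_diag d * V\<^sup>H"
    using hermitian_spectral[OF square_mat_mult_carrier[OF mat_adjoint_carrier[OF M] M]] by auto
  have "\<forall>t\<in>set d. 0 \<le> t"
  proof (rule spectral_nonneg_of_quad_form_nonneg[OF V d])
    fix x :: "complex vec" assume "x \<in> carrier_vec n"
    show "0 \<le> quad_form (V * real_diag d * V\<^sup>H) x"
      unfolding MM[symmetric] quad_form_adjoint_mult_self[OF M \<open>x \<in> carrier_vec n\<close>]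
      by (rule sq_norm_vec_nonneg)
  qed
  moreover have abs: "mat_abs M = V * real_diag (map sqrt d) * V\<^sup>H"
    unfolding mat_abs_def using mat_fun_spectral[OF V d MM] .
  moreover have "sing_vals M = rev (sort (map sqrt d))"
    unfolding sing_vals_def using sorted_eigenvalues_spectral[OF V _ abs] d by simp
  ultimately show ?thesis using that V d MM by blast
qed

lemma sing_val_nonneg:
  assumes "M \<in> carrier_mat n n" "j \<in> {1..n}"
  shows "0 \<le> sing_val M j"
proof -
  obtain V d where "unitary_mat n V" "length d = n" and d0: "\<forall>t\<in>set d. 0 \<le> t"
    and "M\<^sup>H * M = V * real_diag d * V\<^sup>H" "mat_abs M = V * real_diag (map sqrt d) * V\<^sup>H"
    and sv: "sing_vals M = rev (sort (map sqrt d))"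
    by (rule sing_vals_spectral[OF assms(1)])
  then have "sing_val M j \<in> sqrt ` set d"
    using assms(2) nth_mem[of "j - 1" "sing_vals M"] unfolding sing_val_def sv by auto
  then show ?thesis using d0 by auto
qed

lemma op_norm_nonneg: "M \<in> carrier_mat n n \<Longrightarrow> 0 < n \<Longrightarrow> 0 \<le> op_norm M"
  unfolding op_norm_def by (rule sing_val_nonneg) auto

definition pos_semidef :: "nat \<Rightarrow> complex mat \<Rightarrow> bool" where
  "pos_semidef n A \<longleftrightarrow> A \<in> carrier_mat n n \<and> A\<^sup>H = A \<and> (\<forall>x\<in>carrier_vec n. 0 \<le> quad_form A x)"

lemma pos_semidef_add:
  assumes "pos_semidef n A" "pos_semidef n B"
  shows "pos_semidef n (A + B)"
  using assms unfolding pos_semidef_def by (auto simp: mat_adjoint_add quad_form_add)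

lemma pos_semidef_unitary_diag:
  assumes U: "unitary_mat n U" and d: "length d = n" and d0: "\<forall>t\<in>set d. 0 \<le> t"
  shows "pos_semidef n (U * real_diag d * U\<^sup>H)"
proof -
  have Uc: "U \<in> carrier_mat n n" and Dc: "real_diag d \<in> carrier_mat n n"
    using U d unitary_mat_carrier by auto
  have "(U * real_diag d * U\<^sup>H)\<^sup>H = U * real_diag d * U\<^sup>H"
    using Uc Dc by (simp add: mat_adjoint_mult[of _ n n _ n] square_mat_simps[where n=n])
  moreover have "0 \<le> quad_form (U * real_diag d * U\<^sup>H) x" if "x \<in> carrier_vec n" for x
    unfolding quad_form_spectral[OF U d that] using d d0 by (auto intro!: sum_nonneg)
  ultimately show ?thesis unfolding pos_semidef_def using Uc Dc by auto
qed

lemma pos_semidef_spectral: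
  assumes "pos_semidef n A"
  obtains U d where "unitary_mat n U" "length d = n" "\<forall>t\<in>set d. 0 \<le> t" "A = U * real_diag d * U\<^sup>H"
proof -
  obtain U d where U: "unitary_mat n U" and d: "length d = n" and A: "A = U * real_diag d * U\<^sup>H"
    using hermitian_spectral[of A n] assms unfolding pos_semidef_def by auto
  moreover have "\<forall>t\<in>set d. 0 \<le> t"
    using spectral_nonneg_of_quad_form_nonneg[OF U d] assms A unfolding pos_semidef_def by blast
  ultimately show ?thesis using that by blast
qed

lemma pos_semidef_mat_fun_abs:
  assumes M: "M \<in> carrier_mat n n" and \<phi>: "\<And>t. t \<ge> 0 \<Longrightarrow> \<phi> t \<ge> 0"
  shows "pos_semidef n (mat_fun \<phi> (mat_abs M))"
proof -
  obtain V d where V: "unitary_mat n V" and d: "length d = n" and d0: "\<forall>t\<in>set d. 0 \<le> t"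
    and "M\<^sup>H * M = V * real_diag d * V\<^sup>H" and abs: "mat_abs M = V * real_diag (map sqrt d) * V\<^sup>H"
    and "sing_vals M = rev (sort (map sqrt d))"
    by (rule sing_vals_spectral[OF M])
  have "mat_fun \<phi> (mat_abs M) = V * real_diag (map (\<phi> \<circ> sqrt) d) * V\<^sup>H"
    using mat_fun_spectral[OF V _ abs] d by simp
  then show ?thesis
    using pos_semidef_unitary_diag[OF V, of "map (\<phi> \<circ> sqrt) d"] d d0 \<phi> by auto
qed

lemma pos_semidef_sum_mat_fun_sq_abs:
  assumes "M \<in> carrier_mat n n" "N \<in> carrier_mat n n"
  shows "pos_semidef n (mat_fun (\<lambda>t. (\<phi> t)\<^sup>2) (mat_abs M) + mat_fun (\<lambda>t. (\<psi> t)\<^sup>2) (mat_abs N))"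
  by (intro pos_semidef_add pos_semidef_mat_fun_abs assms) simp_all

lemma sing_vals_pos_semidef:
  assumes U: "unitary_mat n U" and d: "length d = n" and d0: "\<forall>t\<in>set d. 0 \<le> t"
    and A: "A = U * real_diag d * U\<^sup>H"
  shows "sing_vals A = rev (sort d)"
proof -
  have Uc: "U \<in> carrier_mat n n" and Dc: "real_diag d \<in> carrier_mat n n"
    using U d unitary_mat_carrier by auto
  have "A\<^sup>H = A" using A pos_semidef_unitary_diag[OF U d d0] unfolding pos_semidef_def by blast
  then have "A\<^sup>H * A = U * (real_diag d * real_diag d) * U\<^sup>H"
    unfolding A using Uc Dc U by (simp add: square_mat_simps[where n=n] unitary_mat_cancel)
  also have "\<dots> = U * real_diag (map (\<lambda>t. t\<^sup>2) d) * U\<^sup>H"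
    by (simp add: real_diag_mult_real_diag power2_eq_square zip_same_conv_map o_def)
  finally have "mat_abs A = U * real_diag (map (sqrt \<circ> (\<lambda>t. t\<^sup>2)) d) * U\<^sup>H"
    unfolding mat_abs_def using mat_fun_spectral[OF U] d by simp
  also have "map (sqrt \<circ> (\<lambda>t. t\<^sup>2)) d = d" using d0 by (induct d) auto
  finally show ?thesis
    unfolding sing_vals_def using sorted_eigenvalues_spectral[OF U d] by simp
qed

lemma quad_form_le_op_norm:
  assumes Q: "pos_semidef n Q" and x: "x \<in> carrier_vec n"
  shows "quad_form Q x \<le> op_norm Q * sq_norm_vec x"
proof -
  obtain U q where U: "unitary_mat n U" and q: "length q = n" and q0: "\<forall>t\<in>set q. 0 \<le> t"
    and QU: "Q = U * real_diag q * U\<^sup>H"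
    by (rule pos_semidef_spectral[OF Q])
  have "op_norm Q = rev (sort q) ! 0"
    unfolding op_norm_def sing_val_def sing_vals_pos_semidef[OF U q q0 QU] by simp
  then have "i < n \<Longrightarrow> q ! i \<le> op_norm Q" for i using nth_le_sorted_desc_0[of i q] q by simp
  then have "quad_form Q x \<le> (\<Sum>i<n. op_norm Q * (cmod ((U\<^sup>H *\<^sub>v x) $ i))\<^sup>2)"
    unfolding QU quad_form_spectral[OF U q x] by (auto intro!: sum_mono mult_right_mono)
  also have "\<dots> = op_norm Q * sq_norm_vec (U\<^sup>H *\<^sub>v x)"
    using x unitary_mat_carrier[OF U] by (simp add: sum_distrib_left sq_norm_vec_def)
  also have "\<dots> = op_norm Q * sq_norm_vec x"
    unfolding sq_norm_vec_unitary[OF U x] ..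
  finally show ?thesis .
qed

subsection \<open>Weyl's monotonicity principle\<close>

lemma nonzero_orthogonal_vec_exists:
  fixes rs :: "'a :: field vec list"
  assumes rs: "set rs \<subseteq> carrier_vec N" and len: "length rs < N"
  obtains z where "z \<in> carrier_vec N" "z \<noteq> 0\<^sub>v N" "\<And>r. r \<in> set rs \<Longrightarrow> r \<bullet> z = 0"
proof -
  define c where "c i = (if i < length rs then rs ! i else 0\<^sub>v N)" for i
  have c: "c i \<in> carrier_vec N" for i
    using rs nth_mem[of i rs] by (auto simp: c_def)
  define A where "A = mat\<^sub>r N N (\<lambda>i. if i = N - 1 then 0\<^sub>v N else c i)"
  have A: "A \<in> carrier_mat N N" unfolding A_def by auto
  have "det A = 0" unfolding A_def by (rule det_row_0) (use len c in auto)
  then obtain z where z: "z \<in> carrier_vec N" "z \<noteq> 0\<^sub>v N" "A *\<^sub>v z = 0\<^sub>v N"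
    using det_0_iff_vec_prod_zero_field[OF A] by auto
  have "r \<bullet> z = 0" if "r \<in> set rs" for r
  proof -
    obtain i where i: "i < length rs" and r: "r = rs ! i" using \<open>r \<in> set rs\<close>
      by (auto simp: in_set_conv_nth)
    have "row A i = r" unfolding A_def using i len c[of i] by (auto simp: c_def r)
    moreover have "(A *\<^sub>v z) $ i = 0" using z(3) i len by simp
    ultimately show "r \<bullet> z = 0" using i len A by simp
  qed
  then show ?thesis using that z by blast
qed

lemma length_filter_notin:
  assumes "J \<subseteq> {..<n}"
  shows "length (filter (\<lambda>i. i \<notin> J) [0..<n]) = n - card J"
proof -
  have "length (filter (\<lambda>i. i \<notin> J) [0..<n]) = card ({..<n} - J)"
    unfolding length_filter_conv_card by (rule arg_cong[where f=card]) auto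
  then show ?thesis using assms by (simp add: card_Diff_subset finite_subset)
qed

lemma common_image_with_supports:
  fixes U V :: "'a :: field mat"
  assumes Uc: "U \<in> carrier_mat n n" and Vc: "V \<in> carrier_mat n n"
    and I: "I \<subseteq> {..<n}" and K: "K \<subseteq> {..<n}" and card: "n < card I + card K"
  obtains a b where "a \<in> carrier_vec n" "b \<in> carrier_vec n" "a @\<^sub>v b \<noteq> 0\<^sub>v (n + n)"
    "U *\<^sub>v a = V *\<^sub>v b" "\<And>i. i < n \<Longrightarrow> i \<notin> I \<Longrightarrow> a $ i = 0" "\<And>k. k < n \<Longrightarrow> k \<notin> K \<Longrightarrow> b $ k = 0"
proof -
  define rs where "rs = map (\<lambda>r. row U r @\<^sub>v - row V r) [0..<n]
      @ map (\<lambda>i. unit_vec n i @\<^sub>v 0\<^sub>v n) (filter (\<lambda>i. i \<notin> I) [0..<n])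
      @ map (\<lambda>k. 0\<^sub>v n @\<^sub>v unit_vec n k) (filter (\<lambda>k. k \<notin> K) [0..<n])"
  have "length rs < n + n"
    unfolding rs_def using I K card card_mono[OF _ I] card_mono[OF _ K]
    by (simp add: length_filter_notin)
  moreover have "set rs \<subseteq> carrier_vec (n + n)" unfolding rs_def using Uc Vc by auto
  ultimately obtain z where z: "z \<in> carrier_vec (n + n)" "z \<noteq> 0\<^sub>v (n + n)"
    and zr: "\<And>r. r \<in> set rs \<Longrightarrow> r \<bullet> z = 0"
    using nonzero_orthogonal_vec_exists by blast
  define a where "a = vec_first z n"
  define b where "b = vec_last z n"
  have ab: "z = a @\<^sub>v b" unfolding a_def b_def using z(1) by simp
  have a: "a \<in> carrier_vec n" and b: "b \<in> carrier_vec n" unfolding a_def b_def by auto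
  have Uab: "U *\<^sub>v a = V *\<^sub>v b"
  proof (rule eq_vecI)
    fix r assume "r < dim_vec (V *\<^sub>v b)"
    then have r: "r < n" using Vc by auto
    then have "(row U r @\<^sub>v - row V r) \<bullet> z = 0" using zr unfolding rs_def by simp
    then show "(U *\<^sub>v a) $ r = (V *\<^sub>v b) $ r"
      unfolding ab using r Uc Vc a b by (simp add: scalar_prod_append[of _ n _ n])
  qed (use Uc Vc in auto)
  have a0: "a $ i = 0" if "i < n" "i \<notin> I" for i
  proof -
    have "(unit_vec n i @\<^sub>v 0\<^sub>v n) \<bullet> z = 0" using zr that unfolding rs_def by simp
    then show ?thesis unfolding ab using that a b by (simp add: scalar_prod_append[of _ n _ n])
  qed
  have b0: "b $ k = 0" if "k < n" "k \<notin> K" for k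
  proof -
    have "(0\<^sub>v n @\<^sub>v unit_vec n k) \<bullet> z = 0" using zr that unfolding rs_def by simp
    then show ?thesis unfolding ab using that a b by (simp add: scalar_prod_append[of _ n _ n])
  qed
  show ?thesis using that a b z(2) Uab a0 b0 unfolding ab by blast
qed

text \<open>The conditions on \<open>U\<^sup>H x\<close> and \<open>V\<^sup>H x\<close> say that \<open>x\<close> lies in the span of the columns of \<open>U\<close>
  indexed by \<open>I\<close> and in that of the columns of \<open>V\<close> indexed by \<open>K\<close>.\<close>

lemma unitary_supports_intersect:
  assumes U: "unitary_mat n U" and V: "unitary_mat n V"
    and I: "I \<subseteq> {..<n}" and K: "K \<subseteq> {..<n}" and card: "n < card I + card K"
  obtains x where "x \<in> carrier_vec n" "x \<noteq> 0\<^sub>v n"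
    "\<And>i. i < n \<Longrightarrow> i \<notin> I \<Longrightarrow> (U\<^sup>H *\<^sub>v x) $ i = 0"
    "\<And>k. k < n \<Longrightarrow> k \<notin> K \<Longrightarrow> (V\<^sup>H *\<^sub>v x) $ k = 0"
proof -
  have Uc: "U \<in> carrier_mat n n" and Vc: "V \<in> carrier_mat n n" using U V unitary_mat_carrier by auto
  obtain a b where a: "a \<in> carrier_vec n" and b: "b \<in> carrier_vec n" and ab: "a @\<^sub>v b \<noteq> 0\<^sub>v (n + n)"
    and Uab: "U *\<^sub>v a = V *\<^sub>v b" and a0: "\<And>i. i < n \<Longrightarrow> i \<notin> I \<Longrightarrow> a $ i = 0"
    and b0: "\<And>k. k < n \<Longrightarrow> k \<notin> K \<Longrightarrow> b $ k = 0"
    using common_image_with_supports[OF Uc Vc I K card] by blast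
  define x where "x = U *\<^sub>v a"
  have x: "x \<in> carrier_vec n" unfolding x_def using Uc a by auto
  have Ux: "U\<^sup>H *\<^sub>v x = a" unfolding x_def using U a by (simp add: unitary_mat_cancel_vec)
  have Vx: "V\<^sup>H *\<^sub>v x = b" unfolding x_def Uab using V b by (simp add: unitary_mat_cancel_vec)
  have "x \<noteq> 0\<^sub>v n"
  proof
    assume "x = 0\<^sub>v n"
    then have "a = 0\<^sub>v n" "b = 0\<^sub>v n" using Ux Vx Uc Vc by auto
    then show False using ab by auto
  qed
  then show ?thesis using that x Ux Vx a0 b0 by simp
qed

lemma card_sorted_desc_ge:
  fixes xs :: "'a :: linorder list"
  assumes "1 \<le> j" "j \<le> length xs"
  shows "j \<le> card {i. i < length xs \<and> rev (sort xs) ! (j-1) \<le> xs ! i}"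
proof -
  let ?ys = "rev (sort xs)"
  have "card {i. i < length xs \<and> ?ys ! (j-1) \<le> xs ! i} = length (filter (\<lambda>t. ?ys ! (j-1) \<le> t) xs)"
    by (simp add: length_filter_conv_card)
  also have "\<dots> = length (filter (\<lambda>t. ?ys ! (j-1) \<le> t) ?ys)"
    by (metis mset_filter mset_rev mset_sort size_mset)
  also have "\<dots> = card {i. i < length ?ys \<and> ?ys ! (j-1) \<le> ?ys ! i}"
    by (simp add: length_filter_conv_card)
  also have "card {0..<j} \<le> \<dots>"
    using assms sorted_desc_nth_mono[of _ "j-1" xs] by (intro card_mono) auto
  finally show ?thesis by simp
qed

lemma card_sorted_desc_le:
  fixes xs :: "'a :: linorder list"
  assumes "1 \<le> j" "j \<le> length xs"
  shows "length xs - j + 1 \<le> card {i. i < length xs \<and> xs ! i \<le> rev (sort xs) ! (j-1)}"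
proof -
  let ?ys = "rev (sort xs)"
  have "card {i. i < length xs \<and> xs ! i \<le> ?ys ! (j-1)} = length (filter (\<lambda>t. t \<le> ?ys ! (j-1)) xs)"
    by (simp add: length_filter_conv_card)
  also have "\<dots> = length (filter (\<lambda>t. t \<le> ?ys ! (j-1)) ?ys)"
    by (metis mset_filter mset_rev mset_sort size_mset)
  also have "\<dots> = card {i. i < length ?ys \<and> ?ys ! i \<le> ?ys ! (j-1)}"
    by (simp add: length_filter_conv_card)
  also have "card {j-1..<length xs} \<le> \<dots>"
    using assms sorted_desc_nth_mono[of "j-1" _ xs] by (intro card_mono) auto
  finally show ?thesis using assms by simp
qed

text \<open>Take a nonzero \<open>x\<close> in the span of the eigenvectors of \<open>A\<close> for its \<open>j\<close> largest eigenvalues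
  and in that of the eigenvectors of \<open>B\<close> for its \<open>n - j + 1\<close> smallest ones; then
  \<open>\<alpha> |x|\<^sup>2 \<le> \<langle>A x, x\<rangle> \<le> c \<langle>B x, x\<rangle> \<le> c \<beta> |x|\<^sup>2\<close>.\<close>

theorem sorted_eigenvalues_mono:
  assumes U: "unitary_mat n U" and a: "length a = n" and V: "unitary_mat n V" and b: "length b = n"
    and c: "0 \<le> c"
    and le: "\<And>x. x \<in> carrier_vec n \<Longrightarrow>
      quad_form (U * real_diag a * U\<^sup>H) x \<le> c * quad_form (V * real_diag b * V\<^sup>H) x"
    and j: "1 \<le> j" "j \<le> n"
  shows "rev (sort a) ! (j-1) \<le> c * rev (sort b) ! (j-1)"
proof -
  define \<alpha> where "\<alpha> = rev (sort a) ! (j-1)"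
  define \<beta> where "\<beta> = rev (sort b) ! (j-1)"
  define I where "I = {i. i < n \<and> \<alpha> \<le> a ! i}"
  define K where "K = {k. k < n \<and> b ! k \<le> \<beta>}"
  have "j \<le> card I" unfolding I_def \<alpha>_def using card_sorted_desc_ge[of j a] j a by simp
  moreover have "n - j + 1 \<le> card K"
    unfolding K_def \<beta>_def using card_sorted_desc_le[of j b] j b by simp
  ultimately have "n < card I + card K" using j by linarith
  then obtain x where x: "x \<in> carrier_vec n" "x \<noteq> 0\<^sub>v n"
    and xI: "\<And>i. i < n \<Longrightarrow> i \<notin> I \<Longrightarrow> (U\<^sup>H *\<^sub>v x) $ i = 0"
    and xK: "\<And>k. k < n \<Longrightarrow> k \<notin> K \<Longrightarrow> (V\<^sup>H *\<^sub>v x) $ k = 0"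
    using unitary_supports_intersect[OF U V _ _ \<open>n < card I + card K\<close>] by (auto simp: I_def K_def)
  have Uc: "U \<in> carrier_mat n n" and Vc: "V \<in> carrier_mat n n" using U V unitary_mat_carrier by auto
  have "\<alpha> * sq_norm_vec x = \<alpha> * sq_norm_vec (U\<^sup>H *\<^sub>v x)"
    unfolding sq_norm_vec_unitary[OF U x(1)] ..
  also have "\<dots> = (\<Sum>i<n. \<alpha> * (cmod ((U\<^sup>H *\<^sub>v x) $ i))\<^sup>2)"
    using Uc x by (simp add: sum_distrib_left sq_norm_vec_def)
  also have "\<dots> \<le> (\<Sum>i<n. a ! i * (cmod ((U\<^sup>H *\<^sub>v x) $ i))\<^sup>2)"
    using xI by (intro sum_mono) (force simp: I_def intro: mult_right_mono)
  also have "\<dots> \<le> c * (\<Sum>k<n. b ! k * (cmod ((V\<^sup>H *\<^sub>v x) $ k))\<^sup>2)"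
    using le[OF x(1)] unfolding quad_form_spectral[OF U a x(1)] quad_form_spectral[OF V b x(1)] .
  also have "\<dots> \<le> c * (\<Sum>k<n. \<beta> * (cmod ((V\<^sup>H *\<^sub>v x) $ k))\<^sup>2)"
    using xK c by (intro mult_left_mono sum_mono) (force simp: K_def intro: mult_right_mono)+
  also have "\<dots> = c * \<beta> * sq_norm_vec (V\<^sup>H *\<^sub>v x)"
    using Vc x by (simp add: sum_distrib_left sq_norm_vec_def mult.assoc)
  also have "\<dots> = c * \<beta> * sq_norm_vec x"
    unfolding sq_norm_vec_unitary[OF V x(1)] ..
  finally show ?thesis unfolding \<alpha>_def \<beta>_def using sq_norm_vec_pos[OF x] by simp
qed

subsection \<open>The mixed Cauchy--Schwarz inequality\<close>

lemma diag_gram_entry_nonzero: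
  assumes M: "M \<in> carrier_mat n n" and d: "length d = n" and d': "length d' = n"
    and MM: "M\<^sup>H * M = real_diag d" and MM': "M * M\<^sup>H = real_diag d'"
    and k: "k < n" and i: "i < n" and nz: "M $$ (k,i) \<noteq> 0"
  shows "d ! i = d' ! k \<and> 0 < d ! i"
proof -
  have "M * real_diag d = real_diag d' * M"
    using M d d' by (simp flip: MM MM' add: square_mat_simps[where n=n])
  from arg_cong[OF this, of "\<lambda>A. A $$ (k,i)"]
  have "M $$ (k,i) * d ! i = d' ! k * M $$ (k,i)"
    using mult_real_diag_index[of M n d k i] real_diag_mult_index[of M d' n k i] M d d' k i by simp
  with nz have "d ! i = d' ! k" by (simp add: mult.commute)
  moreover have "complex_of_real (d ! i) = col M i \<bullet>c col M i"
    using adjoint_mult_index[OF M M i i] MM i d by simp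
  then have "d ! i = (\<Sum>l<n. (cmod (M $$ (l,i)))\<^sup>2)"
    using M i by (simp add: cscalar_prod_self sq_norm_vec_def del: of_real_sum of_real_power)
  moreover have "0 < (\<Sum>l<n. (cmod (M $$ (l,i)))\<^sup>2)"
  proof -
    have "0 < (cmod (M $$ (k,i)))\<^sup>2" using nz by simp
    also have "\<dots> \<le> (\<Sum>l<n. (cmod (M $$ (l,i)))\<^sup>2)" by (rule member_le_sum) (use k in auto)
    finally show ?thesis .
  qed
  ultimately show ?thesis by simp
qed

lemma diag_gram_rescaled_contraction:
  assumes M: "M \<in> carrier_mat n n" and d: "length d = n" and MM: "M\<^sup>H * M = real_diag d"
    and u: "u \<in> carrier_vec n"
  defines "N \<equiv> M * real_diag (map (\<lambda>t. if 0 < t then 1 / sqrt t else 0) d)"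
  shows "sq_norm_vec (N *\<^sub>v u) \<le> sq_norm_vec u"
proof -
  define R where "R = map (\<lambda>t. if 0 < t then 1 / sqrt t else 0) d"
  define E where "E = map2 (*) (map2 (*) R d) R"
  have R: "real_diag R \<in> carrier_mat n n" and N: "N \<in> carrier_mat n n"
    using M d by (auto simp: N_def R_def)
  have E: "length E = n" "\<And>i. i < n \<Longrightarrow> E ! i \<le> 1"
    using d by (auto simp: E_def R_def)
  have "N\<^sup>H * N = real_diag R * (M\<^sup>H * M) * real_diag R"
    unfolding N_def R_def[symmetric] using M R
    by (simp add: mat_adjoint_mult[of _ n n _ n] square_mat_simps[where n=n])
  also have "\<dots> = real_diag E"
    unfolding MM E_def using d by (simp add: R_def real_diag_mult_real_diag)
  finally have "sq_norm_vec (N *\<^sub>v u) = (\<Sum>i<n. E ! i * (cmod (u $ i))\<^sup>2)"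
    using quad_form_adjoint_mult_self[OF N u] quad_form_real_diag[of u E] u E by simp
  also have "\<dots> \<le> (\<Sum>i<n. (cmod (u $ i))\<^sup>2)"
    using E mult_right_mono[of "E ! _" 1 "(cmod (u $ _))\<^sup>2"] by (intro sum_mono) simp
  finally show ?thesis using u by (simp add: sq_norm_vec_def)
qed

text \<open>The contraction is \<open>N = M diag(1/\<surd>d)\<close>; the factorisation holds entrywise because \<open>M\<close>
  only connects equal eigenvalues of \<open>M\<^sup>H M\<close> and \<open>M M\<^sup>H\<close>, where \<open>f(\<surd>t) g(\<surd>t) / \<surd>t = 1\<close>.\<close>

lemma contraction_factorization:
  assumes M: "M \<in> carrier_mat n n" and d: "length d = n" and d': "length d' = n"
    and MM: "M\<^sup>H * M = real_diag d" and MM': "M * M\<^sup>H = real_diag d'"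
    and fg: "\<And>t. t \<ge> 0 \<Longrightarrow> f t * g t = t"
  obtains N where "N \<in> carrier_mat n n"
    "M = real_diag (map (g \<circ> sqrt) d') * N * real_diag (map (f \<circ> sqrt) d)"
    "\<And>u. u \<in> carrier_vec n \<Longrightarrow> sq_norm_vec (N *\<^sub>v u) \<le> sq_norm_vec u"
proof -
  define F where "F = map (f \<circ> sqrt) d"
  define G where "G = map (g \<circ> sqrt) d'"
  define R where "R = map (\<lambda>t. if 0 < t then 1 / sqrt t else 0) d"
  have lens: "length F = n" "length G = n" "length R = n"
    unfolding F_def G_def R_def using d d' by auto
  define N where "N = M * real_diag R"
  have N: "N \<in> carrier_mat n n" unfolding N_def using M lens by auto
  have "M = real_diag G * N * real_diag F"
  proof (rule eq_matI)
    fix k i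
    assume "k < dim_row (real_diag G * N * real_diag F)" "i < dim_col (real_diag G * N * real_diag F)"
    then have k: "k < n" and i: "i < n" using lens by auto
    have "(real_diag G * N * real_diag F) $$ (k,i) = G ! k * (M $$ (k,i) * R ! i) * F ! i"
      using mult_real_diag_index[of "real_diag G * N" n F k i] real_diag_mult_index[of N G n k i]
        mult_real_diag_index[of M n R k i] M N lens k i
        square_mat_mult_carrier[OF real_diag_carrier'[OF lens(2)] N] by (simp add: N_def)
    moreover have "G ! k * R ! i * F ! i = 1" if "M $$ (k,i) \<noteq> 0"
      using diag_gram_entry_nonzero[OF M d d' MM MM' k i that] fg[of "sqrt (d ! i)"] k i d d'
      by (auto simp: G_def R_def F_def field_simps)
    ultimately show "M $$ (k,i) = (real_diag G * N * real_diag F) $$ (k,i)"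
      by (cases "M $$ (k,i) = 0") (auto simp: field_simps simp flip: of_real_mult)
  qed (use M lens in auto)
  moreover have "sq_norm_vec (N *\<^sub>v u) \<le> sq_norm_vec u" if "u \<in> carrier_vec n" for u
    unfolding N_def R_def using diag_gram_rescaled_contraction[OF M d MM that] .
  ultimately show ?thesis using that N unfolding F_def G_def by blast
qed

lemma unitary_conj_gram_diag:
  assumes T: "T \<in> carrier_mat n n" and V: "unitary_mat n V" and W: "unitary_mat n W"
    and d: "length d = n" and d': "length d' = n"
    and TT: "T\<^sup>H * T = V * real_diag d * V\<^sup>H" and TT': "T * T\<^sup>H = W * real_diag d' * W\<^sup>H"
  shows "(W\<^sup>H * T * V)\<^sup>H * (W\<^sup>H * T * V) = real_diag d"
    and "(W\<^sup>H * T * V) * (W\<^sup>H * T * V)\<^sup>H = real_diag d'"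
proof -
  have Vc: "V \<in> carrier_mat n n" and Wc: "W \<in> carrier_mat n n"
    and Dd: "real_diag d \<in> carrier_mat n n" and Dd': "real_diag d' \<in> carrier_mat n n"
    using V W d d' unitary_mat_carrier by auto
  have "(W\<^sup>H * T * V)\<^sup>H * (W\<^sup>H * T * V) = V\<^sup>H * (T\<^sup>H * T) * V"
    using T Vc Wc W
    by (simp add: mat_adjoint_mult[of _ n n _ n] square_mat_simps[where n=n] unitary_mat_cancel)
  then show "(W\<^sup>H * T * V)\<^sup>H * (W\<^sup>H * T * V) = real_diag d"
    unfolding TT using V Vc Dd
    by (simp add: square_mat_simps[where n=n] unitary_mat_cancel unitary_matD)
  have "(W\<^sup>H * T * V) * (W\<^sup>H * T * V)\<^sup>H = W\<^sup>H * (T * T\<^sup>H) * W"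
    using T Vc Wc V
    by (simp add: mat_adjoint_mult[of _ n n _ n] square_mat_simps[where n=n] unitary_mat_cancel)
  then show "(W\<^sup>H * T * V) * (W\<^sup>H * T * V)\<^sup>H = real_diag d'"
    unfolding TT' using W Wc Dd'
    by (simp add: square_mat_simps[where n=n] unitary_mat_cancel unitary_matD)
qed

lemma cscalar_prod_diag_contraction_diag:
  assumes N: "N \<in> carrier_mat n n" and F: "length F = n" and G: "length G = n"
    and contr: "\<And>u. u \<in> carrier_vec n \<Longrightarrow> sq_norm_vec (N *\<^sub>v u) \<le> sq_norm_vec u"
    and a: "a \<in> carrier_vec n" and b: "b \<in> carrier_vec n"
  shows "(cmod (((real_diag G * N * real_diag F) *\<^sub>v a) \<bullet>c b))\<^sup>2
    \<le> sq_norm_vec (real_diag F *\<^sub>v a) * sq_norm_vec (real_diag G *\<^sub>v b)"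
proof -
  have DF: "real_diag F \<in> carrier_mat n n" and DG: "real_diag G \<in> carrier_mat n n" using F G by auto
  have Fa: "real_diag F *\<^sub>v a \<in> carrier_vec n" and Gb: "real_diag G *\<^sub>v b \<in> carrier_vec n"
    using DF DG a b by auto
  have "((real_diag G * N * real_diag F) *\<^sub>v a) \<bullet>c b
      = (real_diag G *\<^sub>v (N *\<^sub>v (real_diag F *\<^sub>v a))) \<bullet>c b"
    using DG N DF a by (simp add: mat_vec_assoc_square[of _ n])
  also have "\<dots> = (N *\<^sub>v (real_diag F *\<^sub>v a)) \<bullet>c (real_diag G *\<^sub>v b)"
    using cscalar_prod_adjoint[of "real_diag G" n n "N *\<^sub>v (real_diag F *\<^sub>v a)" b] DG N Fa b by simp
  finally have "(cmod (((real_diag G * N * real_diag F) *\<^sub>v a) \<bullet>c b))\<^sup>2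
      \<le> sq_norm_vec (N *\<^sub>v (real_diag F *\<^sub>v a)) * sq_norm_vec (real_diag G *\<^sub>v b)"
    using cscalar_prod_cauchy_schwarz[of _ n] N Fa Gb by simp
  also have "\<dots> \<le> sq_norm_vec (real_diag F *\<^sub>v a) * sq_norm_vec (real_diag G *\<^sub>v b)"
    using contr[OF Fa] by (simp add: mult_right_mono sq_norm_vec_nonneg)
  finally show ?thesis .
qed

theorem mixed_cauchy_schwarz:
  assumes T: "T \<in> carrier_mat n n" and fg: "\<And>t. t \<ge> 0 \<Longrightarrow> f t * g t = t"
    and x: "x \<in> carrier_vec n" and y: "y \<in> carrier_vec n"
  shows "(cmod ((T *\<^sub>v x) \<bullet>c y))\<^sup>2 \<le>
    quad_form (mat_fun (\<lambda>t. (f t)\<^sup>2) (mat_abs T)) x *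
    quad_form (mat_fun (\<lambda>t. (g t)\<^sup>2) (mat_abs (T\<^sup>H))) y"
proof -
  obtain V d where V: "unitary_mat n V" and d: "length d = n" and "\<forall>t\<in>set d. 0 \<le> t"
    and TT: "T\<^sup>H * T = V * real_diag d * V\<^sup>H" and absT: "mat_abs T = V * real_diag (map sqrt d) * V\<^sup>H"
    and "sing_vals T = rev (sort (map sqrt d))"
    by (rule sing_vals_spectral[OF T])
  obtain W d' where W: "unitary_mat n W" and d': "length d' = n" and "\<forall>t\<in>set d'. 0 \<le> t"
    and TT': "T * T\<^sup>H = W * real_diag d' * W\<^sup>H"
    and absT': "mat_abs (T\<^sup>H) = W * real_diag (map sqrt d') * W\<^sup>H"
    and "sing_vals (T\<^sup>H) = rev (sort (map sqrt d'))"
    using sing_vals_spectral[OF mat_adjoint_carrier[OF T]] by (metis mat_adjoint_adjoint)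
  have Vc: "V \<in> carrier_mat n n" and Wc: "W \<in> carrier_mat n n"
    using V W unitary_mat_carrier by auto
  define M where "M = W\<^sup>H * T * V"
  have Mc: "M \<in> carrier_mat n n" unfolding M_def using T Vc Wc by auto
  have MM: "M\<^sup>H * M = real_diag d" and MM': "M * M\<^sup>H = real_diag d'"
    unfolding M_def using unitary_conj_gram_diag[OF T V W d d' TT TT'] by auto
  define F where "F = map (f \<circ> sqrt) d"
  define G where "G = map (g \<circ> sqrt) d'"
  obtain N where N: "N \<in> carrier_mat n n" and MN: "M = real_diag G * N * real_diag F"
    and contr: "\<And>u. u \<in> carrier_vec n \<Longrightarrow> sq_norm_vec (N *\<^sub>v u) \<le> sq_norm_vec u"
    using contraction_factorization[OF Mc d d' MM MM' fg] unfolding F_def G_def by blast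
  define a where "a = V\<^sup>H *\<^sub>v x"
  define b where "b = W\<^sup>H *\<^sub>v y"
  have a: "a \<in> carrier_vec n" and b: "b \<in> carrier_vec n"
    unfolding a_def b_def using Vc Wc x y by auto
  have "(T *\<^sub>v x) \<bullet>c y = (W\<^sup>H *\<^sub>v (T *\<^sub>v x)) \<bullet>c b"
    unfolding b_def using cscalar_prod_adjoint[of "W\<^sup>H" n n "T *\<^sub>v x" b] Wc T x b
      unitary_mat_cancel_vec(2)[OF W y] by (simp add: b_def)
  also have "W\<^sup>H *\<^sub>v (T *\<^sub>v x) = M *\<^sub>v a"
    unfolding M_def a_def
    using Wc T Vc x unitary_mat_cancel_vec(2)[OF V x] mult_carrier_mat[of "W\<^sup>H" n n T n]
    by (simp add: mat_vec_assoc_square[of _ n])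
  finally have "(cmod ((T *\<^sub>v x) \<bullet>c y))\<^sup>2
      \<le> sq_norm_vec (real_diag F *\<^sub>v a) * sq_norm_vec (real_diag G *\<^sub>v b)"
    unfolding MN using cscalar_prod_diag_contraction_diag[OF N _ _ contr a b] d d'
    by (simp add: F_def G_def)
  also have "sq_norm_vec (real_diag F *\<^sub>v a) = quad_form (mat_fun (\<lambda>t. (f t)\<^sup>2) (mat_abs T)) x"
    using mat_fun_spectral[OF V _ absT] d a quad_form_spectral[OF V _ x]
    by (simp add: sq_norm_real_diag_mult_vec F_def a_def)
  also have "sq_norm_vec (real_diag G *\<^sub>v b) = quad_form (mat_fun (\<lambda>t. (g t)\<^sup>2) (mat_abs (T\<^sup>H))) y"
    using mat_fun_spectral[OF W _ absT'] d' b quad_form_spectral[OF W _ y]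
    by (simp add: sq_norm_real_diag_mult_vec G_def b_def)
  finally show ?thesis .
qed

lemma sing_val_le_of_sq_norm_le:
  assumes M: "M \<in> carrier_mat n n" and P: "pos_semidef n P" and c: "0 \<le> c"
    and le: "\<And>x. x \<in> carrier_vec n \<Longrightarrow> sq_norm_vec (M *\<^sub>v x) \<le> c * quad_form P x"
    and j: "j \<in> {1..n}"
  shows "sing_val M j \<le> sqrt c * sqrt (sing_val P j)"
proof -
  obtain V a where V: "unitary_mat n V" and a: "length a = n" and "\<forall>t\<in>set a. 0 \<le> t"
    and MM: "M\<^sup>H * M = V * real_diag a * V\<^sup>H" and "mat_abs M = V * real_diag (map sqrt a) * V\<^sup>H"
    and svM: "sing_vals M = rev (sort (map sqrt a))"
    by (rule sing_vals_spectral[OF M])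
  obtain U p where U: "unitary_mat n U" and p: "length p = n" and p0: "\<forall>t\<in>set p. 0 \<le> t"
    and PU: "P = U * real_diag p * U\<^sup>H"
    by (rule pos_semidef_spectral[OF P])
  have weyl: "rev (sort a) ! (j - 1) \<le> c * rev (sort p) ! (j - 1)"
  proof (rule sorted_eigenvalues_mono[OF V a U p c])
    fix x :: "complex vec" assume x: "x \<in> carrier_vec n"
    show "quad_form (V * real_diag a * V\<^sup>H) x \<le> c * quad_form (U * real_diag p * U\<^sup>H) x"
      using le[OF x] unfolding MM[symmetric] PU[symmetric] quad_form_adjoint_mult_self[OF M x] .
  qed (use j in auto)
  have "rev (sort (map sqrt a)) = map sqrt (rev (sort a))"
    by (rule sorted_desc_map_mono) (simp add: mono_def)
  moreover have "j - 1 < length (rev (sort a))" using j a by auto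
  ultimately have "sing_val M j = sqrt (rev (sort a) ! (j - 1))"
    unfolding sing_val_def svM by simp
  moreover have "sing_val P j = rev (sort p) ! (j - 1)"
    unfolding sing_val_def sing_vals_pos_semidef[OF U p p0 PU] ..
  ultimately show ?thesis using real_sqrt_le_mono[OF weyl] by (simp add: real_sqrt_mult)
qed

lemma schatten_norm_le_of_sing_val_le:
  assumes M: "M \<in> carrier_mat n n" and P: "P \<in> carrier_mat n n" and p: "0 < p" and C: "0 \<le> C"
    and le: "\<And>j. j \<in> {1..n} \<Longrightarrow> sing_val M j \<le> sqrt C * sqrt (sing_val P j)"
  shows "schatten_norm p M \<le> sqrt C * sqrt (schatten_norm (p / 2) P)"
proof -
  define X where "X = (\<Sum>j=1..n. sing_val P j powr (p / 2))"
  have "(\<Sum>j=1..n. sing_val M j powr p) \<le> (\<Sum>j=1..n. sqrt C powr p * sing_val P j powr (p / 2))"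
  proof (rule sum_mono)
    fix j assume j: "j \<in> {1..n}"
    have "sing_val M j powr p \<le> (sqrt C * sqrt (sing_val P j)) powr p"
      using le[OF j] sing_val_nonneg[OF M j] p by (intro powr_mono2) auto
    also have "\<dots> = sqrt C powr p * sing_val P j powr (p / 2)"
      using sing_val_nonneg[OF P j] by (simp add: powr_mult powr_half_sqrt[symmetric] powr_powr)
    finally show "sing_val M j powr p \<le> sqrt C powr p * sing_val P j powr (p / 2)" .
  qed
  also have "\<dots> = sqrt C powr p * X" unfolding X_def by (simp add: sum_distrib_left)
  finally have "(\<Sum>j=1..n. sing_val M j powr p) powr (1 / p) \<le> (sqrt C powr p * X) powr (1 / p)"
    using p by (intro powr_mono2) (auto intro: sum_nonneg)
  also have "\<dots> = sqrt C * X powr (1 / p)"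
    using p C by (simp add: powr_mult powr_powr)
  also have "X powr (1 / p) = sqrt (X powr (1 / (p / 2)))"
    by (simp add: powr_half_sqrt[symmetric] powr_powr X_def sum_nonneg)
  finally show ?thesis
    using M P unfolding schatten_norm_def X_def by simp
qed

lemma sq_sum_le_of_sq_le:
  fixes X Y a b c d :: real
  assumes "0 \<le> X" "0 \<le> Y" "0 \<le> a" "0 \<le> b" "0 \<le> c" "0 \<le> d" "X\<^sup>2 \<le> a * b" "Y\<^sup>2 \<le> c * d"
  shows "(X + Y)\<^sup>2 \<le> (a + c) * (b + d)"
proof -
  have "(2 * X * Y)\<^sup>2 \<le> 4 * ((a * d) * (c * b))"
    using assms mult_mono[of "X\<^sup>2" "a * b" "Y\<^sup>2" "c * d"] by (simp add: power_mult_distrib ac_simps)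
  also have "\<dots> \<le> (a * d + c * b)\<^sup>2"
    using zero_le_power2[of "a * d - c * b"] by (simp add: power2_eq_square algebra_simps)
  finally have "2 * X * Y \<le> a * d + c * b"
    by (rule power2_le_imp_le) (use assms in simp)
  then show ?thesis using assms(7,8) by (simp add: power2_sum algebra_simps)
qed

lemma mixed_cauchy_schwarz_add:
  assumes T: "T \<in> carrier_mat n n" and S: "S \<in> carrier_mat n n"
    and fg: "\<And>t. t \<ge> 0 \<Longrightarrow> f t * g t = t" and eh: "\<And>t. t \<ge> 0 \<Longrightarrow> e t * h t = t"
    and x: "x \<in> carrier_vec n" and y: "y \<in> carrier_vec n"
  shows "(cmod ((T *\<^sub>v x) \<bullet>c y) + cmod ((S *\<^sub>v x) \<bullet>c y))\<^sup>2 \<le>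
    quad_form (mat_fun (\<lambda>t. (f t)\<^sup>2) (mat_abs T) + mat_fun (\<lambda>t. (e t)\<^sup>2) (mat_abs S)) x *
    quad_form (mat_fun (\<lambda>t. (g t)\<^sup>2) (mat_abs (T\<^sup>H)) + mat_fun (\<lambda>t. (h t)\<^sup>2) (mat_abs (S\<^sup>H))) y"
proof -
  let ?fT = "mat_fun (\<lambda>t. (f t)\<^sup>2) (mat_abs T)" and ?eS = "mat_fun (\<lambda>t. (e t)\<^sup>2) (mat_abs S)"
  let ?gT = "mat_fun (\<lambda>t. (g t)\<^sup>2) (mat_abs (T\<^sup>H))" and ?hS = "mat_fun (\<lambda>t. (h t)\<^sup>2) (mat_abs (S\<^sup>H))"
  have psd: "pos_semidef n ?fT" "pos_semidef n ?eS" "pos_semidef n ?gT" "pos_semidef n ?hS"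
    using T S by (simp_all add: pos_semidef_mat_fun_abs)
  have "(cmod ((T *\<^sub>v x) \<bullet>c y) + cmod ((S *\<^sub>v x) \<bullet>c y))\<^sup>2
      \<le> (quad_form ?fT x + quad_form ?eS x) * (quad_form ?gT y + quad_form ?hS y)"
    using psd x y mixed_cauchy_schwarz[OF T fg x y] mixed_cauchy_schwarz[OF S eh x y]
    by (intro sq_sum_le_of_sq_le) (auto simp: pos_semidef_def)
  also have "\<dots> = quad_form (?fT + ?eS) x * quad_form (?gT + ?hS) y"
    using psd x y by (simp add: quad_form_add[where n=n] pos_semidef_def)
  finally show ?thesis .
qed

lemma sq_norm_add_mult_vec_le:
  assumes T: "T \<in> carrier_mat n n" and S: "S \<in> carrier_mat n n"
    and fg: "\<And>t. t \<ge> 0 \<Longrightarrow> f t * g t = t" and eh: "\<And>t. t \<ge> 0 \<Longrightarrow> e t * h t = t"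
    and x: "x \<in> carrier_vec n"
  defines "P \<equiv> mat_fun (\<lambda>t. (f t)\<^sup>2) (mat_abs T) + mat_fun (\<lambda>t. (e t)\<^sup>2) (mat_abs S)"
    and "Q \<equiv> mat_fun (\<lambda>t. (g t)\<^sup>2) (mat_abs (T\<^sup>H)) + mat_fun (\<lambda>t. (h t)\<^sup>2) (mat_abs (S\<^sup>H))"
  shows "sq_norm_vec ((T + S) *\<^sub>v x) \<le> op_norm Q * quad_form P x"
proof -
  have P: "pos_semidef n P" and Q: "pos_semidef n Q"
    unfolding P_def Q_def using T S by (simp_all add: pos_semidef_sum_mat_fun_sq_abs)
  define y where "y = (T + S) *\<^sub>v x"
  have y: "y \<in> carrier_vec n"
    unfolding y_def using mult_mat_vec_carrier[OF add_carrier_mat[OF S] x] .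
  have "complex_of_real (sq_norm_vec y) = (T *\<^sub>v x) \<bullet>c y + (S *\<^sub>v x) \<bullet>c y"
    unfolding cscalar_prod_self[symmetric] unfolding y_def using T S x
    by (simp add: add_mult_distrib_mat_vec[of _ n n] add_scalar_prod_distrib[of _ n])
  then have "sq_norm_vec y \<le> cmod ((T *\<^sub>v x) \<bullet>c y) + cmod ((S *\<^sub>v x) \<bullet>c y)"
    by (metis norm_of_real norm_triangle_ineq abs_of_nonneg sq_norm_vec_nonneg)
  then have "(sq_norm_vec y)\<^sup>2 \<le> (cmod ((T *\<^sub>v x) \<bullet>c y) + cmod ((S *\<^sub>v x) \<bullet>c y))\<^sup>2"
    using sq_norm_vec_nonneg by (simp add: power_mono)
  also have "\<dots> \<le> quad_form P x * quad_form Q y"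
    unfolding P_def Q_def by (rule mixed_cauchy_schwarz_add[OF T S fg eh x y])
  also have "\<dots> \<le> quad_form P x * (op_norm Q * sq_norm_vec y)"
    using quad_form_le_op_norm[OF Q y] P x by (intro mult_left_mono) (auto simp: pos_semidef_def)
  finally have le: "sq_norm_vec y * sq_norm_vec y \<le> (op_norm Q * quad_form P x) * sq_norm_vec y"
    by (simp add: power2_eq_square ac_simps)
  have "0 \<le> op_norm Q * quad_form P x"
  proof (cases "n = 0")
    case True
    then show ?thesis using x by (simp add: quad_form_def scalar_prod_def)
  next
    case False
    then have "0 \<le> op_norm Q" using Q op_norm_nonneg[of Q n] by (simp add: pos_semidef_def)
    moreover have "0 \<le> quad_form P x" using P x unfolding pos_semidef_def by blast
    ultimately show ?thesis by simp
  qed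
  then show ?thesis
    unfolding y_def[symmetric] using le sq_norm_vec_nonneg[of y]
    by (cases "sq_norm_vec y = 0") (auto intro: mult_right_le_imp_le)
qed

theorem theorem4p2:
  fixes n :: nat and T S :: "complex mat" and e f g h :: "real \<Rightarrow> real"
  assumes T: "T \<in> carrier_mat n n" and S: "S \<in> carrier_mat n n"
    and cont: "continuous_on {0..} e" "continuous_on {0..} f"
              "continuous_on {0..} g" "continuous_on {0..} h"
    and nonneg: "\<And>t. t \<ge> 0 \<Longrightarrow> e t \<ge> 0 \<and> f t \<ge> 0 \<and> g t \<ge> 0 \<and> h t \<ge> 0"
    and fg: "\<And>t. t \<ge> 0 \<Longrightarrow> f t * g t = t"
    and eh: "\<And>t. t \<ge> 0 \<Longrightarrow> e t * h t = t"
  shows "(\<forall>j\<in>{1..n}. sing_val (T + S) j \<le>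
            sqrt (op_norm (mat_fun (\<lambda>t. (g t)\<^sup>2) (mat_abs (mat_adjoint T))
                         + mat_fun (\<lambda>t. (h t)\<^sup>2) (mat_abs (mat_adjoint S))))
          * sqrt (sing_val (mat_fun (\<lambda>t. (f t)\<^sup>2) (mat_abs T)
                         + mat_fun (\<lambda>t. (e t)\<^sup>2) (mat_abs S)) j))
       \<and> (\<forall>p::real. p > 0 \<longrightarrow> schatten_norm p (T + S) \<le>
            sqrt (op_norm (mat_fun (\<lambda>t. (g t)\<^sup>2) (mat_abs (mat_adjoint T))
                         + mat_fun (\<lambda>t. (h t)\<^sup>2) (mat_abs (mat_adjoint S))))
          * sqrt (schatten_norm (p / 2) (mat_fun (\<lambda>t. (f t)\<^sup>2) (mat_abs T)
                         + mat_fun (\<lambda>t. (e t)\<^sup>2) (mat_abs S))))"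
proof -
  let ?P = "mat_fun (\<lambda>t. (f t)\<^sup>2) (mat_abs T) + mat_fun (\<lambda>t. (e t)\<^sup>2) (mat_abs S)"
  let ?Q = "mat_fun (\<lambda>t. (g t)\<^sup>2) (mat_abs (T\<^sup>H)) + mat_fun (\<lambda>t. (h t)\<^sup>2) (mat_abs (S\<^sup>H))"
  have TS: "T + S \<in> carrier_mat n n" using S by simp
  have P: "pos_semidef n ?P" and Q: "pos_semidef n ?Q"
    using T S by (simp_all add: pos_semidef_sum_mat_fun_sq_abs)
  show ?thesis
  proof (cases "n = 0")
    case True
    then have "dim_row (T + S) = 0" "dim_row ?P = 0"
      using TS P carrier_matD(1) unfolding pos_semidef_def by blast+
    then show ?thesis using True by (simp add: schatten_norm_def)
  next
    case False
    have C: "0 \<le> op_norm ?Q" using Q False op_norm_nonneg[of ?Q n] by (simp add: pos_semidef_def)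
    have "sing_val (T + S) j \<le> sqrt (op_norm ?Q) * sqrt (sing_val ?P j)" if "j \<in> {1..n}" for j
      using sing_val_le_of_sq_norm_le[OF TS P C sq_norm_add_mult_vec_le[OF T S fg eh] that] .
    then show ?thesis
      using schatten_norm_le_of_sing_val_le[OF TS _ _ C] P by (auto simp: pos_semidef_def)
  qed
qed

end
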